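(* Let $n\ge 4$. Let $B_1$ and $B_2$ be squares of type B for the EvenQuads-$2^n$ deck, and suppose they have the same repeat pattern up to shuffling rows/columns and reflection along the main diagonal; that is, there is a map $t$ of the set of $16$ positions, which is a composition of a permutation of the rows, a permutation of the columns, and possibly the reflection along the main diagonal, such that for all positions $p,q$ one has $B_1(p)=B_1(q)$ if and only if $B_2(t(p))=B_2(t(q))$. Then the number of legit pairs of $B_1$ equals the number of legit pairs of $B_2$.
   Context: Cards of the EvenQuads-$2^n$ deck are the integers $0,\dots,2^n-1$; four integers form a quad iff their bitwise XOR $\oplus$ is $0$. In this context a square is a $4\times4$ array of such integers (repetitions allowed) in which every row and every column has bitwise XOR $0$. A square of type A is such a square with all entries in $\{0,\dots,15\}$, first row $0,1,2,3$ and first column $0,4,8,12$. A square of type B is such a square with all entries divisible by $16$ (and less than $2^n$), whose first row and first column consist of zeros. A square of type C is such a square with $16$ pairwise distinct entries, first row $0,1,2,3$ and first column $0,4,8,12$. The repeat pattern of a square of type B is the set of pairs of positions in which it has equal entries. Given a square $B$ of type B, a square $A$ of type A is a legit pair of $B$ if the entrywise sum $A+B$ has no repeated entries (then $A+B$ is of type C). *)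

theory Defs
  imports Main
begin

text \<open>A 4x4 array is a function on positions (i,j) with i,j < 4; it is
  extended by 0 outside the 16 positions so that arrays are determined by
  their 16 entries.\<close>

definition positions :: "(nat \<times> nat) set" where
  "positions = {0..<4} \<times> {0..<4}"

definition is_square :: "nat \<Rightarrow> (nat \<times> nat \<Rightarrow> nat) \<Rightarrow> bool" where
  "is_square n S \<longleftrightarrow>
     (\<forall>p. p \<notin> positions \<longrightarrow> S p = 0) \<and>
     (\<forall>p\<in>positions. S p < 2 ^ n) \<and>
     (\<forall>i<4. xor (xor (S (i,0)) (S (i,1))) (xor (S (i,2)) (S (i,3))) = 0) \<and>
     (\<forall>j<4. xor (xor (S (0,j)) (S (1,j))) (xor (S (2,j)) (S (3,j))) = 0)"

definition typeA :: "nat \<Rightarrow> (nat \<times> nat \<Rightarrow> nat) \<Rightarrow> bool" where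
  "typeA n S \<longleftrightarrow> is_square n S \<and>
     (\<forall>p\<in>positions. S p \<le> 15) \<and>
     (\<forall>j<4. S (0,j) = j) \<and> (\<forall>i<4. S (i,0) = 4 * i)"

definition typeB :: "nat \<Rightarrow> (nat \<times> nat \<Rightarrow> nat) \<Rightarrow> bool" where
  "typeB n S \<longleftrightarrow> is_square n S \<and>
     (\<forall>p\<in>positions. 16 dvd S p) \<and>
     (\<forall>j<4. S (0,j) = 0) \<and> (\<forall>i<4. S (i,0) = 0)"

definition legit_pair :: "nat \<Rightarrow> (nat \<times> nat \<Rightarrow> nat) \<Rightarrow> (nat \<times> nat \<Rightarrow> nat) \<Rightarrow> bool" where
  "legit_pair n B A \<longleftrightarrow> typeA n A \<and> inj_on (\<lambda>p. A p + B p) positions"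

definition num_legit_pairs :: "nat \<Rightarrow> (nat \<times> nat \<Rightarrow> nat) \<Rightarrow> nat" where
  "num_legit_pairs n B = card {A. legit_pair n B A}"

text \<open>Map of positions: row permutation sigma, column permutation tau,
  optionally followed by reflection along the main diagonal.  Every composition
  of such operations (in any order) has this form.\<close>
definition pos_map :: "bool \<Rightarrow> (nat \<Rightarrow> nat) \<Rightarrow> (nat \<Rightarrow> nat) \<Rightarrow> nat \<times> nat \<Rightarrow> nat \<times> nat" where
  "pos_map reflect \<sigma> \<tau> p = (if reflect then (\<tau> (snd p), \<sigma> (fst p)) else (\<sigma> (fst p), \<tau> (snd p)))"

end

theory Submission
  imports Defs
begin

text \<open>Since the entries of B are multiples of 16 and those of A lie below 16, A + B has no
  repeats iff A separates the repeats of B: B p = B q and A p = A q only for p = q.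
  Read 0..15 as GF(2)^4. The invertible affine maps of GF(2)^4 act freely on the 4-bit squares
  separating B, and when B is constant on its first row and column every orbit contains exactly
  one square normalized as in type A: the affine map is read off the first row and column, and it
  is invertible because a separating square has seven distinct entries there. So the number of
  legit pairs is the number of separating squares divided by the number of invertible affine
  maps. The number of separating squares depends only on the repeat pattern of B and is invariant
  under permuting rows and columns and transposing, since these operations preserve squares.\<close>

unbundle bit_operations_syntax

lemma xor_left_self_nat [simp]: "(a::nat) XOR (a XOR b) = b"
  by (simp add: xor.assoc[symmetric])

lemma xor_eq_0_iff_nat: "((a::nat) XOR b = 0) \<longleftrightarrow> a = b"
  by (metis xor_left_self_nat xor_self_eq)

lemma xor_left_cancel_nat: "((a::nat) XOR b = a XOR c) \<longleftrightarrow> b = c"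
  by (metis xor_left_self_nat)

lemma xor_less_two_power_nat:
  assumes "(a::nat) < 2 ^ m" "b < 2 ^ m"
  shows "a XOR b < 2 ^ m"
proof -
  have "take_bit m a = a" "take_bit m b = b"
    using assms by (simp_all add: take_bit_nat_eq_self_iff)
  then have "take_bit m (a XOR b) = a XOR b"
    by simp
  then show ?thesis
    by (metis take_bit_nat_less_exp)
qed

lemmas xor_less_16 = xor_less_two_power_nat[where m = 4, simplified]

lemma less_16_cases: "(k::nat) < 16 \<Longrightarrow> k \<in> {0,1,2,3,4,5,6,7,8,9,10,11,12,13,14,15}"
  by (simp add: lessThan_nat_numeral lessThan_Suc flip: lessThan_iff) (elim disjE; simp)

lemma positions_iff [simp]: "(i, j) \<in> positions \<longleftrightarrow> i < 4 \<and> j < 4"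
  by (simp add: positions_def)

lemma is_square_outside: "is_square m S \<Longrightarrow> p \<notin> positions \<Longrightarrow> S p = 0"
  unfolding is_square_def by blast

lemma is_square_less: "is_square m S \<Longrightarrow> p \<in> positions \<Longrightarrow> S p < 2 ^ m"
  by (simp add: is_square_def)

lemma is_square_row: "is_square m S \<Longrightarrow> i < 4 \<Longrightarrow> (S (i,0) XOR S (i,1)) XOR (S (i,2) XOR S (i,3)) = 0"
  by (simp add: is_square_def)

lemma is_square_column: "is_square m S \<Longrightarrow> j < 4 \<Longrightarrow> (S (0,j) XOR S (1,j)) XOR (S (2,j) XOR S (3,j)) = 0"
  by (simp add: is_square_def)

definition map_entries :: "(nat \<Rightarrow> nat) \<Rightarrow> (nat \<times> nat \<Rightarrow> nat) \<Rightarrow> nat \<times> nat \<Rightarrow> nat" where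
  "map_entries f S = (\<lambda>p. if p \<in> positions then f (S p) else 0)"

definition reindex :: "(nat \<times> nat \<Rightarrow> nat \<times> nat) \<Rightarrow> (nat \<times> nat \<Rightarrow> nat) \<Rightarrow> nat \<times> nat \<Rightarrow> nat" where
  "reindex t S = (\<lambda>p. if p \<in> positions then S (t p) else 0)"

lemma is_square_map_entries:
  assumes "is_square m S"
    and "\<And>a. a < 2 ^ m \<Longrightarrow> f a < 2 ^ k"
    and "\<And>a b c d. a < 2 ^ m \<Longrightarrow> b < 2 ^ m \<Longrightarrow> c < 2 ^ m \<Longrightarrow> d < 2 ^ m \<Longrightarrow>
           (a XOR b) XOR (c XOR d) = 0 \<Longrightarrow> (f a XOR f b) XOR (f c XOR f d) = 0"
  shows "is_square k (map_entries f S)"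
  using assms unfolding is_square_def map_entries_def by auto

lemma map_entries_map_entries_id:
  assumes "\<And>p. p \<in> positions \<Longrightarrow> g (f (S p)) = S p" and "\<And>p. p \<notin> positions \<Longrightarrow> S p = 0"
  shows "map_entries g (map_entries f S) = S"
  using assms by (auto simp: map_entries_def)

lemma reindex_reindex_id:
  assumes "\<And>p. p \<in> positions \<Longrightarrow> t' p \<in> positions \<and> t (t' p) = p"
    and "\<And>p. p \<notin> positions \<Longrightarrow> S p = 0"
  shows "reindex t' (reindex t S) = S"
  using assms by (auto simp: reindex_def)

lemma xor4_permute:
  fixes f \<tau> :: "nat \<Rightarrow> nat"
  assumes "bij_betw \<tau> {0..<4} {0..<4}"
  shows "(f (\<tau> 0) XOR f (\<tau> 1)) XOR (f (\<tau> 2) XOR f (\<tau> 3)) = (f 0 XOR f 1) XOR (f 2 XOR f 3)"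
proof -
  interpret xor_sum: comm_monoid_set "(XOR) :: nat \<Rightarrow> nat \<Rightarrow> nat" 0 ..
  have four: "{0..<4::nat} = {0,1,2,3}"
    by auto
  have "xor_sum.F (\<lambda>i. f (\<tau> i)) {0..<4} = xor_sum.F f {0..<4}"
    using assms by (rule xor_sum.reindex_bij_betw)
  then show ?thesis
    unfolding four by (simp add: xor.assoc)
qed

lemma pos_map_in_positions:
  assumes "bij_betw \<sigma> {0..<4} {0..<4}" "bij_betw \<tau> {0..<4} {0..<4}" "p \<in> positions"
  shows "pos_map r \<sigma> \<tau> p \<in> positions"
  using assms by (cases p) (auto simp: pos_map_def dest: bij_betwE)

lemma is_square_reindex_pos_map:
  assumes sq: "is_square m S"
    and \<sigma>: "bij_betw \<sigma> {0..<4} {0..<4}" and \<tau>: "bij_betw \<tau> {0..<4} {0..<4}"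
  shows "is_square m (reindex (pos_map r \<sigma> \<tau>) S)"
proof -
  have \<sigma>_less: "\<sigma> i < 4" and \<tau>_less: "\<tau> i < 4" if "i < 4" for i
    using that \<sigma> \<tau> by (auto dest: bij_betwE)
  have "(S (\<sigma> i, \<tau> 0) XOR S (\<sigma> i, \<tau> 1)) XOR (S (\<sigma> i, \<tau> 2) XOR S (\<sigma> i, \<tau> 3)) = 0"
    and "(S (\<tau> 0, \<sigma> i) XOR S (\<tau> 1, \<sigma> i)) XOR (S (\<tau> 2, \<sigma> i) XOR S (\<tau> 3, \<sigma> i)) = 0"
    if "i < 4" for i
    using xor4_permute[OF \<tau>, of "\<lambda>j. S (\<sigma> i, j)"] xor4_permute[OF \<tau>, of "\<lambda>j. S (j, \<sigma> i)"]
      is_square_row[OF sq \<sigma>_less] is_square_column[OF sq \<sigma>_less] that by simp_all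
  moreover have "(S (\<sigma> 0, \<tau> j) XOR S (\<sigma> 1, \<tau> j)) XOR (S (\<sigma> 2, \<tau> j) XOR S (\<sigma> 3, \<tau> j)) = 0"
    and "(S (\<tau> j, \<sigma> 0) XOR S (\<tau> j, \<sigma> 1)) XOR (S (\<tau> j, \<sigma> 2) XOR S (\<tau> j, \<sigma> 3)) = 0"
    if "j < 4" for j
    using xor4_permute[OF \<sigma>, of "\<lambda>i. S (i, \<tau> j)"] xor4_permute[OF \<sigma>, of "\<lambda>i. S (\<tau> j, i)"]
      is_square_column[OF sq \<tau>_less] is_square_row[OF sq \<tau>_less] that by simp_all
  ultimately show ?thesis
    using sq pos_map_in_positions[OF \<sigma> \<tau>]
    by (cases r) (auto simp: is_square_def reindex_def pos_map_def)
qed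

lemma pos_map_inverse:
  assumes "bij_betw \<sigma> {0..<4} {0..<4}" "bij_betw \<tau> {0..<4} {0..<4}"
  obtains \<sigma>' \<tau>' where "bij_betw \<sigma>' {0..<4} {0..<4}" "bij_betw \<tau>' {0..<4} {0..<4}"
    and "\<And>p. p \<in> positions \<Longrightarrow> pos_map r \<sigma>' \<tau>' (pos_map r \<sigma> \<tau> p) = p"
    and "\<And>p. p \<in> positions \<Longrightarrow> pos_map r \<sigma> \<tau> (pos_map r \<sigma>' \<tau>' p) = p"
proof -
  define \<sigma>\<^sub>1 where "\<sigma>\<^sub>1 = inv_into {0..<4} \<sigma>"
  define \<tau>\<^sub>1 where "\<tau>\<^sub>1 = inv_into {0..<4} \<tau>"
  have bij: "bij_betw \<sigma>\<^sub>1 {0..<4} {0..<4}" "bij_betw \<tau>\<^sub>1 {0..<4} {0..<4}"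
    unfolding \<sigma>\<^sub>1_def \<tau>\<^sub>1_def using assms by (simp_all add: bij_betw_inv_into)
  have inv: "\<sigma>\<^sub>1 (\<sigma> i) = i" "\<sigma> (\<sigma>\<^sub>1 i) = i" "\<tau>\<^sub>1 (\<tau> i) = i" "\<tau> (\<tau>\<^sub>1 i) = i" if "i < 4" for i
    using that assms unfolding \<sigma>\<^sub>1_def \<tau>\<^sub>1_def bij_betw_def
    by (auto simp: f_inv_into_f)
  \<comment> \<open>a reflection exchanges the roles of the row and the column permutation\<close>
  show ?thesis
  proof (cases r)
    case True
    show ?thesis
      by (rule that[of \<tau>\<^sub>1 \<sigma>\<^sub>1]) (use bij inv True in \<open>auto simp: pos_map_def\<close>)
  next
    case False
    show ?thesis
      by (rule that[of \<sigma>\<^sub>1 \<tau>\<^sub>1]) (use bij inv False in \<open>auto simp: pos_map_def\<close>)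
  qed
qed

section \<open>Squares separating the repeats of a square\<close>

definition separates :: "(nat \<times> nat \<Rightarrow> nat) \<Rightarrow> (nat \<times> nat \<Rightarrow> nat) \<Rightarrow> bool" where
  "separates B S \<longleftrightarrow> (\<forall>p\<in>positions. \<forall>q\<in>positions. B p = B q \<longrightarrow> S p = S q \<longrightarrow> p = q)"

definition separating_squares :: "(nat \<times> nat \<Rightarrow> nat) \<Rightarrow> (nat \<times> nat \<Rightarrow> nat) set" where
  "separating_squares B = {S. is_square 4 S \<and> separates B S}"

lemma separates_map_entries_iff:
  assumes "inj_on f (S ` positions)"
  shows "separates B (map_entries f S) \<longleftrightarrow> separates B S"
  using assms unfolding separates_def map_entries_def inj_on_def by fastforce

lemma separates_reindex:
  assumes "\<And>p. p \<in> positions \<Longrightarrow> t p \<in> positions" and "inj_on t positions"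
    and "\<And>p q. p \<in> positions \<Longrightarrow> q \<in> positions \<Longrightarrow> B p = B q \<Longrightarrow> B' (t p) = B' (t q)"
    and "separates B' S"
  shows "separates B (reindex t S)"
  using assms unfolding separates_def reindex_def inj_on_def by metis

lemma card_separating_squares_eq:
  assumes \<sigma>: "bij_betw \<sigma> {0..<4} {0..<4}" and \<tau>: "bij_betw \<tau> {0..<4} {0..<4}"
    and pattern: "\<forall>p\<in>positions. \<forall>q\<in>positions.
      B\<^sub>1 p = B\<^sub>1 q \<longleftrightarrow> B\<^sub>2 (pos_map r \<sigma> \<tau> p) = B\<^sub>2 (pos_map r \<sigma> \<tau> q)"
  shows "card (separating_squares B\<^sub>1) = card (separating_squares B\<^sub>2)"
proof -
  obtain \<sigma>' \<tau>' where \<sigma>': "bij_betw \<sigma>' {0..<4} {0..<4}" and \<tau>': "bij_betw \<tau>' {0..<4} {0..<4}"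
    and left_inv: "\<And>p. p \<in> positions \<Longrightarrow> pos_map r \<sigma>' \<tau>' (pos_map r \<sigma> \<tau> p) = p"
    and right_inv: "\<And>p. p \<in> positions \<Longrightarrow> pos_map r \<sigma> \<tau> (pos_map r \<sigma>' \<tau>' p) = p"
    using pos_map_inverse[OF \<sigma> \<tau>, where r = r] by blast
  define t where "t = pos_map r \<sigma> \<tau>"
  define t' where "t' = pos_map r \<sigma>' \<tau>'"
  have t: "t p \<in> positions" and t': "t' p \<in> positions" if "p \<in> positions" for p
    unfolding t_def t'_def using that pos_map_in_positions \<sigma> \<tau> \<sigma>' \<tau>' by blast+
  have t'_t: "t' (t p) = p" and t_t': "t (t' p) = p" if "p \<in> positions" for p
    unfolding t_def t'_def using that left_inv right_inv by blast+
  have pattern_t: "B\<^sub>1 p = B\<^sub>1 q \<longleftrightarrow> B\<^sub>2 (t p) = B\<^sub>2 (t q)" if "p \<in> positions" "q \<in> positions" for p q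
    unfolding t_def using pattern that by blast
  have square_t: "is_square 4 (reindex t S)" and square_t': "is_square 4 (reindex t' S)"
    if "is_square 4 S" for S
    unfolding t_def t'_def using is_square_reindex_pos_map that \<sigma> \<tau> \<sigma>' \<tau>' by blast+
  have inj: "inj_on t positions" "inj_on t' positions"
    using t'_t t_t' by (metis inj_on_inverseI)+
  have "separates B\<^sub>1 (reindex t S)" if "separates B\<^sub>2 S" for S
    by (rule separates_reindex[where t = t]) (use t inj pattern_t that in auto)
  moreover have "separates B\<^sub>2 (reindex t' S)" if "separates B\<^sub>1 S" for S
    by (rule separates_reindex[where t = t']) (use t' inj pattern_t t_t' that in auto)
  moreover have "reindex t' (reindex t S) = S" "reindex t (reindex t' S) = S" if "is_square 4 S" for S
    using is_square_outside[OF that] t t' t'_t t_t' by (auto intro!: reindex_reindex_id)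
  ultimately have "bij_betw (reindex t) (separating_squares B\<^sub>2) (separating_squares B\<^sub>1)"
    using square_t square_t'
    by (intro bij_betw_byWitness[where f' = "reindex t'"]) (auto simp: separating_squares_def)
  then show ?thesis
    by (simp add: bij_betw_same_card)
qed

definition normalized :: "(nat \<times> nat \<Rightarrow> nat) \<Rightarrow> bool" where
  "normalized S \<longleftrightarrow> (\<forall>j<4. S (0,j) = j) \<and> (\<forall>i<4. S (i,0) = 4 * i)"

definition normalized_separating_squares :: "(nat \<times> nat \<Rightarrow> nat) \<Rightarrow> (nat \<times> nat \<Rightarrow> nat) set" where
  "normalized_separating_squares B = {S \<in> separating_squares B. normalized S}"

lemma typeA_iff_normalized_square:
  assumes "4 \<le> n"
  shows "typeA n A \<longleftrightarrow> is_square 4 A \<and> normalized A"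
proof -
  have "(16::nat) \<le> 2 ^ n"
    using power_increasing[OF assms, of "2::nat"] by simp
  then show ?thesis
    unfolding typeA_def is_square_def normalized_def by (auto simp: less_Suc_eq_le[symmetric])
qed

lemma inj_on_add_iff_separates:
  assumes "\<forall>p\<in>positions. A p < m" and "\<forall>p\<in>positions. m dvd B p"
  shows "inj_on (\<lambda>p. A p + B p) positions \<longleftrightarrow> separates B A"
proof
  assume "inj_on (\<lambda>p. A p + B p) positions"
  then show "separates B A"
    unfolding separates_def inj_on_def by metis
next
  assume sep: "separates B A"
  show "inj_on (\<lambda>p. A p + B p) positions"
  proof (rule inj_onI)
    fix p q assume p: "p \<in> positions" and q: "q \<in> positions" and eq: "A p + B p = A q + B q"
    have "A p = (A p + B p) mod m" "A q = (A q + B q) mod m"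
      using assms p q by (auto simp: mod_add_right_eq[symmetric])
    then have "A p = A q" "B p = B q"
      using eq by simp_all
    then show "p = q"
      using sep p q unfolding separates_def by blast
  qed
qed

lemma legit_pair_iff:
  assumes "4 \<le> n" and "\<forall>p\<in>positions. 16 dvd B p"
  shows "legit_pair n B A \<longleftrightarrow> A \<in> normalized_separating_squares B"
proof (cases "is_square 4 A")
  case True
  then have "\<forall>p\<in>positions. A p < 16"
    using is_square_less by fastforce
  then show ?thesis
    using True typeA_iff_normalized_square[OF assms(1)] inj_on_add_iff_separates[OF _ assms(2)]
    unfolding legit_pair_def normalized_separating_squares_def separating_squares_def by auto
next
  case False
  then show ?thesis
    using typeA_iff_normalized_square[OF assms(1)]
    unfolding legit_pair_def normalized_separating_squares_def separating_squares_def by auto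
qed

lemma num_legit_pairs_eq_card:
  assumes "4 \<le> n" and "typeB n B"
  shows "num_legit_pairs n B = card (normalized_separating_squares B)"
proof -
  have "\<forall>p\<in>positions. 16 dvd B p"
    using assms(2) unfolding typeB_def by blast
  then have "{A. legit_pair n B A} = normalized_separating_squares B"
    using legit_pair_iff[OF assms(1)] by blast
  then show ?thesis
    unfolding num_legit_pairs_def by simp
qed

section \<open>Affine bijections of 4-bit numbers\<close>

text \<open>Reading k < 16 as a vector of GF(2)^4, lin4 is the linear map sending the unit vectors
  1, 2, 4, 8 to its first four arguments.\<close>

definition lin4 :: "nat \<Rightarrow> nat \<Rightarrow> nat \<Rightarrow> nat \<Rightarrow> nat \<Rightarrow> nat" where
  "lin4 u\<^sub>0 u\<^sub>1 u\<^sub>2 u\<^sub>3 k =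
     (if bit k 0 then u\<^sub>0 else 0) XOR (if bit k 1 then u\<^sub>1 else 0) XOR
     (if bit k 2 then u\<^sub>2 else 0) XOR (if bit k 3 then u\<^sub>3 else 0)"

definition lin4_indep :: "nat \<Rightarrow> nat \<Rightarrow> nat \<Rightarrow> nat \<Rightarrow> bool" where
  "lin4_indep u\<^sub>0 u\<^sub>1 u\<^sub>2 u\<^sub>3 \<longleftrightarrow> (\<forall>k<16. lin4 u\<^sub>0 u\<^sub>1 u\<^sub>2 u\<^sub>3 k = 0 \<longrightarrow> k = 0)"

lemma lin4_xor: "lin4 u\<^sub>0 u\<^sub>1 u\<^sub>2 u\<^sub>3 (a XOR b) = lin4 u\<^sub>0 u\<^sub>1 u\<^sub>2 u\<^sub>3 a XOR lin4 u\<^sub>0 u\<^sub>1 u\<^sub>2 u\<^sub>3 b"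
proof -
  have if_xor: "(if P \<noteq> Q then u else 0) = (if P then u else 0) XOR (if Q then u else (0::nat))" for P Q u
    by simp
  show ?thesis
    unfolding lin4_def bit_xor_iff if_xor by (simp add: ac_simps)
qed

lemma lin4_less_16:
  "u\<^sub>0 < 16 \<Longrightarrow> u\<^sub>1 < 16 \<Longrightarrow> u\<^sub>2 < 16 \<Longrightarrow> u\<^sub>3 < 16 \<Longrightarrow> lin4 u\<^sub>0 u\<^sub>1 u\<^sub>2 u\<^sub>3 k < 16"
  unfolding lin4_def by (intro xor_less_16) simp_all

type_synonym aff_params = "nat \<times> nat \<times> nat \<times> nat \<times> nat"

fun aff :: "aff_params \<Rightarrow> nat \<Rightarrow> nat" where
  "aff (c, u\<^sub>0, u\<^sub>1, u\<^sub>2, u\<^sub>3) k = c XOR lin4 u\<^sub>0 u\<^sub>1 u\<^sub>2 u\<^sub>3 k"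

definition invertible_affs :: "aff_params set" where
  "invertible_affs = {(c, u\<^sub>0, u\<^sub>1, u\<^sub>2, u\<^sub>3). c < 16 \<and> u\<^sub>0 < 16 \<and> u\<^sub>1 < 16 \<and> u\<^sub>2 < 16 \<and> u\<^sub>3 < 16 \<and>
     lin4_indep u\<^sub>0 u\<^sub>1 u\<^sub>2 u\<^sub>3}"

lemma aff_xor4:
  "(aff (c, u\<^sub>0, u\<^sub>1, u\<^sub>2, u\<^sub>3) a XOR aff (c, u\<^sub>0, u\<^sub>1, u\<^sub>2, u\<^sub>3) b) XOR
     (aff (c, u\<^sub>0, u\<^sub>1, u\<^sub>2, u\<^sub>3) d XOR aff (c, u\<^sub>0, u\<^sub>1, u\<^sub>2, u\<^sub>3) e)
   = lin4 u\<^sub>0 u\<^sub>1 u\<^sub>2 u\<^sub>3 ((a XOR b) XOR (d XOR e))"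
  by (simp add: lin4_xor ac_simps)

lemma aff_less_16: "pr \<in> invertible_affs \<Longrightarrow> aff pr k < 16"
  by (cases pr) (auto simp: invertible_affs_def intro!: xor_less_16 lin4_less_16)

lemma aff_xor4_eq_0_iff:
  assumes "pr \<in> invertible_affs" and "a < 16" "b < 16" "d < 16" "e < 16"
  shows "(aff pr a XOR aff pr b) XOR (aff pr d XOR aff pr e) = 0 \<longleftrightarrow> (a XOR b) XOR (d XOR e) = 0"
proof -
  obtain c u\<^sub>0 u\<^sub>1 u\<^sub>2 u\<^sub>3 where pr: "pr = (c, u\<^sub>0, u\<^sub>1, u\<^sub>2, u\<^sub>3)" and "lin4_indep u\<^sub>0 u\<^sub>1 u\<^sub>2 u\<^sub>3"
    using assms(1) by (auto simp: invertible_affs_def)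
  moreover have "(a XOR b) XOR (d XOR e) < 16"
    using assms(2-5) by (intro xor_less_16)
  ultimately show ?thesis
    using aff_xor4 unfolding lin4_indep_def by (auto simp: lin4_def)
qed

lemma inj_on_aff: "pr \<in> invertible_affs \<Longrightarrow> inj_on (aff pr) {..<16}"
proof (rule inj_onI)
  fix a b assume pr: "pr \<in> invertible_affs" and "a \<in> {..<16}" "b \<in> {..<16}" and eq: "aff pr a = aff pr b"
  obtain c u\<^sub>0 u\<^sub>1 u\<^sub>2 u\<^sub>3 where pr_eq: "pr = (c, u\<^sub>0, u\<^sub>1, u\<^sub>2, u\<^sub>3)" and "lin4_indep u\<^sub>0 u\<^sub>1 u\<^sub>2 u\<^sub>3"
    using pr by (auto simp: invertible_affs_def)
  moreover have "lin4 u\<^sub>0 u\<^sub>1 u\<^sub>2 u\<^sub>3 (a XOR b) = 0"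
    using eq by (simp add: pr_eq lin4_xor xor_left_cancel_nat xor_eq_0_iff_nat)
  moreover have "a XOR b < 16"
    using \<open>a \<in> {..<16}\<close> \<open>b \<in> {..<16}\<close> by (simp add: xor_less_16)
  ultimately have "a XOR b = 0"
    unfolding lin4_indep_def by blast
  then show "a = b"
    by (simp add: xor_eq_0_iff_nat)
qed

lemma bij_betw_aff:
  assumes "pr \<in> invertible_affs"
  shows "bij_betw (aff pr) {..<16} {..<16}"
proof -
  have "aff pr ` {..<16} \<subseteq> {..<16}"
    using aff_less_16[OF assms] by auto
  then have "aff pr ` {..<16} = {..<16}"
    using inj_on_aff[OF assms] by (simp add: endo_inj_surj)
  then show ?thesis
    using inj_on_aff[OF assms] by (simp add: bij_betw_def)
qed

lemma inv_aff_aff: "pr \<in> invertible_affs \<Longrightarrow> k < 16 \<Longrightarrow> inv_into {..<16} (aff pr) (aff pr k) = k"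
  by (simp add: inj_on_aff inv_into_f_f)

lemma aff_inv_aff: "pr \<in> invertible_affs \<Longrightarrow> a < 16 \<Longrightarrow> aff pr (inv_into {..<16} (aff pr) a) = a"
  using bij_betw_aff by (metis bij_betw_imp_surj_on f_inv_into_f lessThan_iff)

lemma inv_aff_less_16: "pr \<in> invertible_affs \<Longrightarrow> a < 16 \<Longrightarrow> inv_into {..<16} (aff pr) a < 16"
  using bij_betw_aff by (metis bij_betw_imp_surj_on inv_into_into lessThan_iff)

lemma card_invertible_affs_pos: "0 < card invertible_affs"
proof -
  have "invertible_affs \<subseteq> {..<16} \<times> {..<16} \<times> {..<16} \<times> {..<16} \<times> {..<16}"
    by (auto simp: invertible_affs_def)
  then have "finite invertible_affs"
    by (rule finite_subset) simp
  moreover have "lin4_indep 1 2 4 8"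
    unfolding lin4_indep_def
    by (intro allI impI, drule less_16_cases) (elim insertE emptyE; simp add: lin4_def bit_0)
  then have "(0, 1, 2, 4, 8) \<in> invertible_affs"
    by (simp add: invertible_affs_def)
  ultimately show ?thesis
    using card_gt_0_iff by blast
qed

section \<open>Normalizing a separating square\<close>

definition first_row_and_column :: "(nat \<times> nat) set" where
  "first_row_and_column = {0} \<times> {..<4} \<union> {..<4} \<times> {0}"

definition cross_params :: "(nat \<times> nat \<Rightarrow> nat) \<Rightarrow> aff_params" where
  "cross_params S =
     (S (0,0), S (0,0) XOR S (0,1), S (0,0) XOR S (0,2), S (0,0) XOR S (1,0), S (0,0) XOR S (2,0))"

lemma aff_cross_params:
  assumes "is_square m S" and "i < 4" "j < 4"
  shows "aff (cross_params S) (4 * i + j) = (S (0,0) XOR S (0,j)) XOR S (i,0)"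
proof -
  have "(S (0,0) XOR S (0,1)) XOR (S (0,2) XOR S (0,3)) = 0"
    "(S (0,0) XOR S (1,0)) XOR (S (2,0) XOR S (3,0)) = 0"
    using is_square_row[OF assms(1), of 0] is_square_column[OF assms(1), of 0] by simp_all
  then have "S (0,3) = S (0,0) XOR S (0,1) XOR S (0,2)" "S (3,0) = S (0,0) XOR S (1,0) XOR S (2,0)"
    by (metis xor_eq_0_iff_nat xor.assoc)+
  moreover have "i = 0 \<or> i = 1 \<or> i = 2 \<or> i = 3" "j = 0 \<or> j = 1 \<or> j = 2 \<or> j = 3"
    using assms(2,3) by auto
  ultimately show ?thesis
    by (elim disjE; simp add: cross_params_def lin4_def bit_0 ac_simps flip: numeral_2_eq_2)
qed

lemma aff_cross_params_first_row: "is_square m S \<Longrightarrow> j < 4 \<Longrightarrow> aff (cross_params S) j = S (0,j)"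
  using aff_cross_params[of m S 0 j] by (simp add: xor.commute)

lemma aff_cross_params_first_column: "is_square m S \<Longrightarrow> i < 4 \<Longrightarrow> aff (cross_params S) (4 * i) = S (i,0)"
  using aff_cross_params[of m S i 0] by simp

lemma cross_params_invertible:
  assumes sq: "is_square 4 S" and inj: "inj_on S first_row_and_column"
  shows "cross_params S \<in> invertible_affs"
proof -
  have "lin4_indep (S (0,0) XOR S (0,1)) (S (0,0) XOR S (0,2)) (S (0,0) XOR S (1,0)) (S (0,0) XOR S (2,0))"
    unfolding lin4_indep_def
  proof (intro allI impI)
    fix k :: nat
    assume "k < 16" and
      lin: "lin4 (S (0,0) XOR S (0,1)) (S (0,0) XOR S (0,2)) (S (0,0) XOR S (1,0)) (S (0,0) XOR S (2,0)) k = 0"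
    define i j where "i = k div 4" and "j = k mod 4"
    have "i < 4" "j < 4" "k = 4 * i + j"
      using \<open>k < 16\<close> by (auto simp: i_def j_def)
    have "S (0,0) = aff (cross_params S) k"
      using lin by (simp add: cross_params_def)
    also have "\<dots> = S (0,0) XOR (S (0,j) XOR S (i,0))"
      using aff_cross_params[OF sq \<open>i < 4\<close> \<open>j < 4\<close>] \<open>k = 4 * i + j\<close> by (simp add: xor.assoc)
    finally have "S (0,j) = S (i,0)"
      by (metis xor_eq_0_iff_nat xor_left_self_nat)
    then have "(0,j) = (i,0)"
      using inj \<open>i < 4\<close> \<open>j < 4\<close> unfolding inj_on_def first_row_and_column_def by blast
    then show "k = 0"
      using \<open>k = 4 * i + j\<close> by simp
  qed
  moreover have "S p < 16" if "p \<in> positions" for p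
    using is_square_less[OF sq that] by simp
  ultimately show ?thesis
    unfolding invertible_affs_def cross_params_def by (auto intro!: xor_less_16)
qed

lemma cross_params_map_entries_aff:
  assumes "normalized A"
  shows "cross_params (map_entries (aff pr) A) = pr"
proof -
  have "A (0,0) = 0" "A (0,1) = 1" "A (0,2) = 2" "A (1,0) = 4" "A (2,0) = 8"
    using assms unfolding normalized_def by auto
  then show ?thesis
    by (cases pr) (simp add: cross_params_def map_entries_def lin4_def bit_0)
qed

definition normalize :: "(nat \<times> nat \<Rightarrow> nat) \<Rightarrow> nat \<times> nat \<Rightarrow> nat" where
  "normalize S = map_entries (inv_into {..<16} (aff (cross_params S))) S"

lemma map_entries_aff_in_separating_squares:
  assumes pr: "pr \<in> invertible_affs" and A: "A \<in> separating_squares B"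
  shows "map_entries (aff pr) A \<in> separating_squares B"
proof -
  have sq: "is_square 4 A" and sep: "separates B A"
    using A unfolding separating_squares_def by auto
  have "is_square 4 (map_entries (aff pr) A)"
    by (rule is_square_map_entries[OF sq]) (use aff_less_16[OF pr] aff_xor4_eq_0_iff[OF pr] in simp_all)
  moreover have "inj_on (aff pr) (A ` positions)"
    using is_square_less[OF sq] by (intro inj_on_subset[OF inj_on_aff[OF pr]]) auto
  then have "separates B (map_entries (aff pr) A)"
    using sep separates_map_entries_iff by blast
  ultimately show ?thesis
    unfolding separating_squares_def by blast
qed

lemma cross_params_separating_square_invertible:
  assumes B: "\<forall>p\<in>first_row_and_column. \<forall>q\<in>first_row_and_column. B p = B q"
    and S: "S \<in> separating_squares B"
  shows "cross_params S \<in> invertible_affs"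
proof -
  have sq: "is_square 4 S" and sep: "separates B S"
    using S unfolding separating_squares_def by auto
  have "inj_on S first_row_and_column"
  proof (rule inj_onI)
    fix p q assume pq: "p \<in> first_row_and_column" "q \<in> first_row_and_column" and "S p = S q"
    moreover have "p \<in> positions" "q \<in> positions"
      using pq by (auto simp: first_row_and_column_def)
    ultimately show "p = q"
      using B sep unfolding separates_def by blast
  qed
  then show ?thesis
    by (rule cross_params_invertible[OF sq])
qed

lemma normalize_in_normalized_separating_squares:
  assumes B: "\<forall>p\<in>first_row_and_column. \<forall>q\<in>first_row_and_column. B p = B q"
    and S: "S \<in> separating_squares B"
  shows "normalize S \<in> normalized_separating_squares B"
proof -
  have sq: "is_square 4 S" and sep: "separates B S"
    using S unfolding separating_squares_def by auto
  have pr: "cross_params S \<in> invertible_affs"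
    using B S by (rule cross_params_separating_square_invertible)
  define g where "g = inv_into {..<16} (aff (cross_params S))"
  have S_less: "S p < 16" if "p \<in> positions" for p
    using is_square_less[OF sq that] by simp
  have square: "is_square 4 (map_entries g S)"
  proof (rule is_square_map_entries[OF sq])
    fix a b d e :: nat
    assume "a < 2 ^ 4" "b < 2 ^ 4" "d < 2 ^ 4" "e < 2 ^ 4" "(a XOR b) XOR (d XOR e) = 0"
    then show "(g a XOR g b) XOR (g d XOR g e) = 0"
      using aff_xor4_eq_0_iff[OF pr, of "g a" "g b" "g d" "g e"]
      by (simp add: g_def aff_inv_aff[OF pr] inv_aff_less_16[OF pr])
  qed (simp add: g_def inv_aff_less_16[OF pr])
  have "S ` positions \<subseteq> aff (cross_params S) ` {..<16}"
    using S_less bij_betw_aff[OF pr] by (auto simp: bij_betw_def)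
  then have "inj_on g (S ` positions)"
    unfolding g_def by (rule inj_on_inv_into)
  then have separates: "separates B (map_entries g S)"
    using sep separates_map_entries_iff by blast
  have first_row: "g (S (0,j)) = j" if "j < 4" for j
    using that by (simp add: g_def inv_aff_aff[OF pr] flip: aff_cross_params_first_row[OF sq that])
  have first_column: "g (S (i,0)) = 4 * i" if "i < 4" for i
    using that by (simp add: g_def inv_aff_aff[OF pr] flip: aff_cross_params_first_column[OF sq that])
  have "normalized (map_entries g S)"
    unfolding normalized_def map_entries_def using first_row first_column by simp
  moreover have "normalize S = map_entries g S"
    by (simp add: normalize_def g_def)
  ultimately show ?thesis
    using square separates unfolding normalized_separating_squares_def separating_squares_def by simp
qed

lemma normalize_map_entries_aff:
  assumes pr: "pr \<in> invertible_affs" and sq: "is_square 4 A" and "normalized A"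
  shows "normalize (map_entries (aff pr) A) = A"
proof -
  have "map_entries (inv_into {..<16} (aff pr)) (map_entries (aff pr) A) = A"
    using inv_aff_aff[OF pr] is_square_less[OF sq] is_square_outside[OF sq]
    by (intro map_entries_map_entries_id) simp_all
  then show ?thesis
    using cross_params_map_entries_aff[OF \<open>normalized A\<close>] by (simp add: normalize_def)
qed

lemma map_entries_aff_normalize:
  assumes sq: "is_square 4 S" and pr: "cross_params S \<in> invertible_affs"
  shows "map_entries (aff (cross_params S)) (normalize S) = S"
  unfolding normalize_def using aff_inv_aff[OF pr] is_square_less[OF sq] is_square_outside[OF sq]
  by (intro map_entries_map_entries_id) simp_all

lemma separating_squares_decomposition:
  assumes B: "\<forall>p\<in>first_row_and_column. \<forall>q\<in>first_row_and_column. B p = B q"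
  shows "bij_betw (\<lambda>(pr, A). map_entries (aff pr) A)
           (invertible_affs \<times> normalized_separating_squares B) (separating_squares B)"
proof (rule bij_betw_byWitness[where f' = "\<lambda>S. (cross_params S, normalize S)"])
  show "\<forall>x \<in> invertible_affs \<times> normalized_separating_squares B.
          (\<lambda>S. (cross_params S, normalize S)) ((\<lambda>(pr, A). map_entries (aff pr) A) x) = x"
    using cross_params_map_entries_aff normalize_map_entries_aff
    by (auto simp: normalized_separating_squares_def separating_squares_def)
  show "\<forall>S \<in> separating_squares B. (\<lambda>(pr, A). map_entries (aff pr) A) (cross_params S, normalize S) = S"
    using map_entries_aff_normalize cross_params_separating_square_invertible[OF B]
    by (auto simp: separating_squares_def)
  show "(\<lambda>(pr, A). map_entries (aff pr) A) ` (invertible_affs \<times> normalized_separating_squares B)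
          \<subseteq> separating_squares B"
    using map_entries_aff_in_separating_squares
    by (auto simp: normalized_separating_squares_def)
  show "(\<lambda>S. (cross_params S, normalize S)) ` separating_squares B
          \<subseteq> invertible_affs \<times> normalized_separating_squares B"
    using cross_params_separating_square_invertible[OF B] normalize_in_normalized_separating_squares[OF B]
    by auto
qed

lemma card_separating_squares:
  assumes "\<forall>p\<in>first_row_and_column. \<forall>q\<in>first_row_and_column. B p = B q"
  shows "card (separating_squares B) = card invertible_affs * card (normalized_separating_squares B)"
  using bij_betw_same_card[OF separating_squares_decomposition[OF assms]]
  by (simp add: card_cartesian_product)

lemma typeB_constant_on_first_row_and_column:
  "typeB n B \<Longrightarrow> \<forall>p\<in>first_row_and_column. \<forall>q\<in>first_row_and_column. B p = B q"
  by (auto simp: typeB_def first_row_and_column_def)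

theorem mainTheorem5:
  fixes n :: nat and B1 B2 :: "nat \<times> nat \<Rightarrow> nat"
    and \<sigma> \<tau> :: "nat \<Rightarrow> nat" and reflect :: bool
  assumes "n \<ge> 4"
    and "typeB n B1" and "typeB n B2"
    and "bij_betw \<sigma> {0..<4} {0..<4}" and "bij_betw \<tau> {0..<4} {0..<4}"
    and "\<forall>p\<in>positions. \<forall>q\<in>positions.
           (B1 p = B1 q) \<longleftrightarrow> (B2 (pos_map reflect \<sigma> \<tau> p) = B2 (pos_map reflect \<sigma> \<tau> q))"
  shows "num_legit_pairs n B1 = num_legit_pairs n B2"
proof -
  have "card (separating_squares B1) = card (separating_squares B2)"
    using assms(4-6) by (rule card_separating_squares_eq)
  then have "card invertible_affs * card (normalized_separating_squares B1)
      = card invertible_affs * card (normalized_separating_squares B2)"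
    using card_separating_squares typeB_constant_on_first_row_and_column assms(2,3) by metis
  then show ?thesis
    using card_invertible_affs_pos num_legit_pairs_eq_card[OF assms(1,2)] num_legit_pairs_eq_card[OF assms(1,3)]
    by simp
qed

end
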